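(* For every integer $\ell\geq 1$, every finite digraph $G$ with $\delta^+(G)\geq (1+\sqrt{5})\ell$ contains $S^-_{2,\ell}$ as a subgraph.
   Context: Digraphs are finite, have no loops and no multiple copies of the same edge, but may contain two edges in opposite directions between a pair of vertices. $\delta^+(G)$ is the minimum out-degree of $G$. $S^-_{k,\ell}$ denotes the $(k-1)$-subdivision of the in-star with $\ell$ leaves, i.e. the oriented tree consisting of a centre vertex and $\ell$ directed paths of length $k$ each ending at the centre, pairwise sharing only the centre. Thus $S^-_{2,\ell}$ consists of a centre $c$ and $\ell$ vertex-disjoint (apart from $c$) directed paths $x_i\to a_i\to c$. Containing it as a subgraph means having a subgraph isomorphic to it. *)

theory Defs
  imports Complex_Main
begin

text \<open>A finite digraph: finite vertex set V, edge set E of ordered pairs within V,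
  no loops. Opposite edges are allowed; no multi-edges (E is a set).\<close>
definition digraph :: "'a set \<Rightarrow> ('a \<times> 'a) set \<Rightarrow> bool" where
  "digraph V E \<longleftrightarrow> finite V \<and> E \<subseteq> V \<times> V \<and> (\<forall>v. (v, v) \<notin> E)"

definition out_degree :: "('a \<times> 'a) set \<Rightarrow> 'a \<Rightarrow> nat" where
  "out_degree E v = card {w. (v, w) \<in> E}"

definition min_out_degree :: "'a set \<Rightarrow> ('a \<times> 'a) set \<Rightarrow> nat" where
  "min_out_degree V E = Min (out_degree E ` V)"

text \<open>G contains the subdivided in-star S^-_{2,l} as a subgraph: a centre c and
  vertices x_i, a_i (i < l), all 2l+1 vertices pairwise distinct, with edges
  x_i \<rightarrow> a_i and a_i \<rightarrow> c.\<close>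
definition contains_S2_in_star :: "'a set \<Rightarrow> ('a \<times> 'a) set \<Rightarrow> nat \<Rightarrow> bool" where
  "contains_S2_in_star V E l \<longleftrightarrow>
     (\<exists>c x a. c \<in> V \<and>
        inj_on x {..<l} \<and> inj_on a {..<l} \<and>
        x ` {..<l} \<inter> a ` {..<l} = {} \<and>
        c \<notin> x ` {..<l} \<and> c \<notin> a ` {..<l} \<and>
        (\<forall>i<l. x i \<in> V \<and> a i \<in> V \<and> (x i, a i) \<in> E \<and> (a i, c) \<in> E))"

end

theory Submission
  imports Defs
begin

(* Since 1 + sqrt 5 > 3 it suffices that every out-degree is at least 3l. Let D be the
   maximum of |S| - |N(S)| over vertex sets S, where N(S) is the set of in-neighbours of S.
   By the deficiency form of Hall's theorem, all but D vertices b can be given pairwise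
   distinct in-neighbours pi b. Take a proper subset S attaining D: every matched vertex
   outside N(S) sends all its out-edges into V - S, and there are at least |V - S| of them,
   so double counting yields c in V - S with 3l matched in-neighbours b. Dropping the b with
   pi b = c, the paths pi b -> b -> c are chosen greedily; each choice excludes at most two
   further paths, which leaves l vertex-disjoint ones. *)

definition sdr :: "'i set \<Rightarrow> ('i \<Rightarrow> 'a set) \<Rightarrow> ('i \<Rightarrow> 'a) \<Rightarrow> bool" where
  "sdr I A f \<longleftrightarrow> inj_on f I \<and> (\<forall>i\<in>I. f i \<in> A i)"

lemma sdr_subset: "sdr I A f \<Longrightarrow> J \<subseteq> I \<Longrightarrow> sdr J A f"
  unfolding sdr_def by (auto intro: inj_on_subset)

lemma sdr_combine:
  assumes "sdr J A g" and "sdr (I - J) (\<lambda>i. A i - \<Union>(A ` J)) h"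
  shows "sdr I A (\<lambda>i. if i \<in> J then g i else h i)"
proof -
  have g: "inj_on g J" "\<And>i. i \<in> J \<Longrightarrow> g i \<in> A i"
    and h: "inj_on h (I - J)" "\<And>i. i \<in> I - J \<Longrightarrow> h i \<in> A i - \<Union>(A ` J)"
    using assms unfolding sdr_def by auto
  have cross: "g i \<noteq> h j" if "i \<in> J" "j \<in> I - J" for i j
    using g(2)[OF that(1)] h(2)[OF that(2)] that(1) by auto
  have "inj_on (\<lambda>i. if i \<in> J then g i else h i) I"
    using g(1) h(1) cross unfolding inj_on_def by (metis DiffI)
  then show ?thesis
    unfolding sdr_def using g(2) h(2) by auto
qed

lemma sdr_update:
  assumes "sdr I (\<lambda>j. A j - {a}) f" and "a \<in> A i"
  shows "sdr (insert i I) A (f(i := a))"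
  using assms unfolding sdr_def inj_on_def by auto

lemma hall_condition_outside_tight_set:
  assumes "finite I" "\<And>i. i \<in> I \<Longrightarrow> finite (A i)"
    and hall: "\<And>J. J \<subseteq> I \<Longrightarrow> card J \<le> card (\<Union>(A ` J))"
    and "J \<subseteq> I" and tight: "card (\<Union>(A ` J)) = card J" and "K \<subseteq> I - J"
  shows "card K \<le> card (\<Union>((\<lambda>i. A i - \<Union>(A ` J)) ` K))"
proof -
  have KJ: "K \<union> J \<subseteq> I" using assms(4,6) by auto
  then have fin: "finite K" "finite J" "finite (K \<union> J)"
    using assms(1) by (auto intro: finite_subset)
  then have fin_UN: "finite (\<Union>(A ` (K \<union> J)))"
    using KJ assms(2) by (intro finite_UN_I) auto
  have "\<Union>((\<lambda>i. A i - \<Union>(A ` J)) ` K) = \<Union>(A ` (K \<union> J)) - \<Union>(A ` J)"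
    by auto
  then have "card (\<Union>((\<lambda>i. A i - \<Union>(A ` J)) ` K)) = card (\<Union>(A ` (K \<union> J))) - card J"
    using fin_UN tight by (simp add: card_Diff_subset finite_subset)
  moreover have "card (K \<union> J) = card K + card J"
    using fin assms(6) by (intro card_Un_disjoint) auto
  moreover have "card (K \<union> J) \<le> card (\<Union>(A ` (K \<union> J)))"
    using assms(4,6) by (intro hall) auto
  ultimately show ?thesis by linarith
qed

lemma hall_condition_remove_element:
  assumes "finite I" "\<And>i. i \<in> I \<Longrightarrow> finite (A i)"
    and hall: "\<And>J. J \<subseteq> I \<Longrightarrow> card J \<le> card (\<Union>(A ` J))"
    and surplus: "\<And>J. J \<subseteq> I \<Longrightarrow> J \<noteq> {} \<Longrightarrow> J \<noteq> I \<Longrightarrow> card J \<noteq> card (\<Union>(A ` J))"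
    and "i \<in> I" and "J \<subseteq> I - {i}"
  shows "card J \<le> card (\<Union>((\<lambda>j. A j - {a}) ` J))"
proof (cases "J = {}")
  case False
  have "J \<subseteq> I" "J \<noteq> I" using assms(5,6) by auto
  then have "card J < card (\<Union>(A ` J))"
    using hall surplus False by (simp add: order.strict_iff_order)
  moreover have "finite (\<Union>(A ` J))"
    using assms(1,2) \<open>J \<subseteq> I\<close> by (auto intro: finite_subset)
  moreover have "\<Union>((\<lambda>j. A j - {a}) ` J) = \<Union>(A ` J) - {a}" by auto
  ultimately show ?thesis by (auto simp: card_Diff_singleton_if)
qed simp

theorem hall_marriage:
  assumes "finite I" "\<And>i. i \<in> I \<Longrightarrow> finite (A i)"
    and "\<And>J. J \<subseteq> I \<Longrightarrow> card J \<le> card (\<Union>(A ` J))"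
  shows "\<exists>f. sdr I A f"
  using assms
proof (induction "card I" arbitrary: I A rule: less_induct)
  case less
  show ?case
  proof (cases "\<exists>J. J \<subseteq> I \<and> J \<noteq> {} \<and> J \<noteq> I \<and> card J = card (\<Union>(A ` J))")
    case True
    then obtain J where J: "J \<subseteq> I" "J \<noteq> {}" "J \<noteq> I" "card J = card (\<Union>(A ` J))"
      by blast
    have "J \<subset> I" "I - J \<subset> I" using J by auto
    then have "card J < card I" "card (I - J) < card I"
      using less.prems(1) by (auto intro: psubset_card_mono)
    have "\<exists>g. sdr J A g"
      using J(1) less.prems by (intro less.hyps[OF \<open>card J < card I\<close>]) (auto intro: finite_subset)
    moreover have "\<exists>h. sdr (I - J) (\<lambda>i. A i - \<Union>(A ` J)) h"
      using less.prems J(1,4)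
      by (intro less.hyps[OF \<open>card (I - J) < card I\<close>] hall_condition_outside_tight_set) auto
    ultimately show ?thesis using sdr_combine by blast
  next
    case no_tight_subset: False
    show ?thesis
    proof (cases "I = {}")
      case False
      then obtain i where i: "i \<in> I" by blast
      then obtain a where a: "a \<in> A i"
        using less.prems(3)[of "{i}"] by fastforce
      have surplus: "card J \<noteq> card (\<Union>(A ` J))" if "J \<subseteq> I" "J \<noteq> {}" "J \<noteq> I" for J
        using no_tight_subset that by blast
      have hall: "card J \<le> card (\<Union>((\<lambda>j. A j - {a}) ` J))" if "J \<subseteq> I - {i}" for J
        using hall_condition_remove_element[OF less.prems surplus i that] .
      have "\<exists>f. sdr (I - {i}) (\<lambda>j. A j - {a}) f"
        using less.prems(1,2) hall
        by (intro less.hyps[OF card_Diff1_less[OF less.prems(1) i]]) auto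
      then obtain f where "sdr (I - {i}) (\<lambda>j. A j - {a}) f" ..
      then have "sdr (insert i (I - {i})) A (f(i := a))"
        using a by (rule sdr_update)
      then have "sdr I A (f(i := a))"
        using i by (simp add: insert_absorb)
      then show ?thesis by blast
    qed (rule exI[of _ "\<lambda>_. undefined"], simp add: sdr_def)
  qed
qed

lemma hall_deficiency:
  fixes A :: "'i \<Rightarrow> 'a set"
  assumes "finite I" "\<And>i. i \<in> I \<Longrightarrow> finite (A i)"
    and "\<And>J. J \<subseteq> I \<Longrightarrow> card J \<le> card (\<Union>(A ` J)) + d"
  shows "\<exists>W f. W \<subseteq> I \<and> card I \<le> card W + d \<and> sdr W A f"
proof -
  define A' where "A' i = Inl ` A i \<union> Inr ` {..<d}" for i
  have "card J \<le> card (\<Union>(A' ` J))" if "J \<subseteq> I" for J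
  proof (cases "J = {}")
    case False
    then have "\<Union>(A' ` J) = Inl ` \<Union>(A ` J) \<union> Inr ` {..<d}"
      unfolding A'_def by auto
    moreover have "finite (\<Union>(A ` J))"
      using that assms(1,2) by (intro finite_UN_I) (auto intro: finite_subset)
    moreover have "Inl ` \<Union>(A ` J) \<inter> Inr ` {..<d} = {}" by auto
    ultimately have "card (\<Union>(A' ` J)) = card (\<Union>(A ` J)) + d"
      by (simp add: card_Un_disjoint card_image)
    then show ?thesis using assms(3)[OF that] by simp
  qed simp
  then obtain f where f: "sdr I A' f"
    using hall_marriage[of I A'] assms(1,2) unfolding A'_def by auto
  define W where "W = {i \<in> I. f i \<in> range Inl}"
  have "sdr W A (projl \<circ> f)"
    using f unfolding sdr_def W_def A'_def inj_on_def by fastforce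
  moreover have "card (I - W) \<le> d"
  proof -
    have "card (I - W) = card (f ` (I - W))"
      using f unfolding sdr_def by (intro card_image[symmetric]) (auto intro: inj_on_subset)
    also have "\<dots> \<le> card (Inr ` {..<d} :: ('a + nat) set)"
      using f unfolding sdr_def W_def A'_def by (intro card_mono) auto
    also have "\<dots> = d" by (simp add: card_image)
    finally show ?thesis .
  qed
  moreover have "W \<subseteq> I" unfolding W_def by auto
  then have "card (I - W) = card I - card W" "card W \<le> card I"
    using assms(1) by (simp_all add: card_Diff_subset finite_subset card_mono)
  ultimately have "card I \<le> card W + d" by linarith
  with \<open>W \<subseteq> I\<close> \<open>sdr W A (projl \<circ> f)\<close> show ?thesis
    by (intro exI[of _ W] exI[of _ "projl \<circ> f"] conjI)
qed

lemma exists_card_ge_by_double_counting: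
  assumes "finite A" "finite B" "B \<noteq> {}" "card B \<le> card A"
    and "\<And>a. a \<in> A \<Longrightarrow> K \<le> card {b \<in> B. R a b}"
  shows "\<exists>b\<in>B. K \<le> card {a \<in> A. R a b}"
proof (rule ccontr)
  assume "\<not> ?thesis"
  then have "(\<Sum>b\<in>B. card {a \<in> A. R a b}) < (\<Sum>b\<in>B. K)"
    using assms(2,3) by (intro sum_strict_mono) auto
  also have "\<dots> \<le> (\<Sum>a\<in>A. K)"
    using assms(4) by simp
  also have "\<dots> \<le> (\<Sum>a\<in>A. card {b \<in> B. R a b})"
    using assms(5) by (intro sum_mono) auto
  also have "\<dots> = (\<Sum>b\<in>B. card {a \<in> A. R a b})"
    using assms(1,2) by (intro sum_multicount_gen) auto
  finally show False by simp
qed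

lemma max_deficiency_set:
  assumes "finite V" "V \<noteq> {}" "E \<subseteq> V \<times> V" "\<And>v. v \<in> V \<Longrightarrow> \<exists>w. (v, w) \<in> E"
  shows "\<exists>S D. S \<subset> V \<and> card S = card (E\<inverse> `` S) + D \<and>
    (\<forall>T\<subseteq>V. card T \<le> card (E\<inverse> `` T) + D)"
proof -
  \<comment> \<open>truncated subtraction is harmless: the empty set has deficiency 0\<close>
  define deficiency where "deficiency T = card T - card (E\<inverse> `` T)" for T
  define D where "D = Max (deficiency ` Pow V)"
  have "D \<in> deficiency ` Pow V"
    unfolding D_def using assms(1) by (intro Max_in) auto
  then obtain S where S: "S \<subseteq> V" "deficiency S = D" by auto
  have le_D: "card T \<le> card (E\<inverse> `` T) + D" if "T \<subseteq> V" for T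
  proof -
    have "deficiency T \<le> D"
      unfolding D_def using assms(1) that by (intro Max_ge) auto
    then show ?thesis unfolding deficiency_def by linarith
  qed
  show ?thesis
  proof (cases "D = 0")
    case True
    then show ?thesis using le_D assms(2) by (intro exI[of _ "{}"] exI[of _ D]) auto
  next
    case False
    have "E\<inverse> `` V = V"
    proof
      show "E\<inverse> `` V \<subseteq> V" using assms(3) by auto
      show "V \<subseteq> E\<inverse> `` V"
      proof
        fix v assume "v \<in> V"
        then obtain w where "(v, w) \<in> E" using assms(4) by blast
        then show "v \<in> E\<inverse> `` V" using assms(3) by blast
      qed
    qed
    then have "S \<noteq> V" using S(2) False unfolding deficiency_def by auto
    then show ?thesis
      using S False le_D unfolding deficiency_def by (intro exI[of _ S] exI[of _ D]) auto
  qed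
qed

lemma exists_subset_with_disjoint_fst_snd:
  assumes "finite P" "inj_on fst P" "inj_on snd P" "\<forall>p\<in>P. fst p \<noteq> snd p"
    and "3 * l \<le> card P + 2"
  shows "\<exists>Q\<subseteq>P. card Q = l \<and> fst ` Q \<inter> snd ` Q = {}"
  using assms
proof (induction l arbitrary: P)
  case (Suc l)
  have "P \<noteq> {}" using Suc.prems(5) by auto
  then obtain u v where uv: "(u, v) \<in> P" by auto
  define R where "R = {(u, v)} \<union> {q \<in> P. fst q = v} \<union> {q \<in> P. snd q = u}"
  define P' where "P' = P - R"
  have "card {q \<in> P. fst q = v} \<le> 1" "card {q \<in> P. snd q = u} \<le> 1"
    using Suc.prems(1-3) by (auto simp: card_le_Suc0_iff_eq inj_on_def)
  then have "card R \<le> 3"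
    using card_Un_le[of "{(u, v)} \<union> {q \<in> P. fst q = v}" "{q \<in> P. snd q = u}"]
      card_Un_le[of "{(u, v)}" "{q \<in> P. fst q = v}"] unfolding R_def by simp
  moreover have "card P - card R \<le> card P'"
    unfolding P'_def using Suc.prems(1) R_def by (intro diff_card_le_card_Diff) auto
  ultimately have "3 * l \<le> card P' + 2"
    using Suc.prems(5) unfolding mult_Suc_right by arith
  moreover have "P' \<subseteq> P" unfolding P'_def by auto
  then have "finite P'" "inj_on fst P'" "inj_on snd P'" "\<forall>p\<in>P'. fst p \<noteq> snd p"
    using Suc.prems(1-4) by (auto intro: finite_subset inj_on_subset)
  ultimately obtain Q where Q: "Q \<subseteq> P'" "card Q = l" "fst ` Q \<inter> snd ` Q = {}"
    using Suc.IH by blast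
  have "finite Q" "(u, v) \<notin> Q"
    using Q(1) \<open>P' \<subseteq> P\<close> Suc.prems(1) unfolding P'_def R_def by (auto intro: finite_subset)
  moreover have "u \<noteq> v" "u \<notin> snd ` Q" "v \<notin> fst ` Q"
    using Q(1) uv Suc.prems(4) unfolding P'_def R_def by auto
  then have "fst ` insert (u, v) Q \<inter> snd ` insert (u, v) Q = {}"
    using Q(3) by auto
  ultimately show ?case
    using Q(1,2) uv \<open>P' \<subseteq> P\<close> by (intro exI[of _ "insert (u, v) Q"]) auto
qed (rule exI[of _ "{}"], simp)

lemma contains_S2_in_starI:
  assumes "c \<in> V" "E \<subseteq> V \<times> V" "finite Q" "card Q = l" "Q \<subseteq> E"
    and "inj_on fst Q" "inj_on snd Q" "fst ` Q \<inter> snd ` Q = {}" "c \<notin> fst ` Q" "c \<notin> snd ` Q"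
    and "\<And>a. a \<in> snd ` Q \<Longrightarrow> (a, c) \<in> E"
  shows "contains_S2_in_star V E l"
proof -
  obtain g where g: "bij_betw g {..<l} Q"
    using ex_bij_betw_nat_finite[OF assms(3)] assms(4) by (auto simp: atLeast0LessThan)
  then have img: "g ` {..<l} = Q" and "inj_on g {..<l}"
    by (auto simp: bij_betw_def)
  have edges: "g i \<in> E" "(snd (g i), c) \<in> E" "fst (g i) \<in> V" "snd (g i) \<in> V"
    if "i < l" for i
  proof -
    have "g i \<in> Q" using img that by blast
    then show "g i \<in> E" "(snd (g i), c) \<in> E" "fst (g i) \<in> V" "snd (g i) \<in> V"
      using assms(2,5,11) by (auto simp: mem_Times_iff)
  qed
  show ?thesis
    unfolding contains_S2_in_star_def
  proof (intro exI conjI allI impI)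
    show "inj_on (fst \<circ> g) {..<l}" "inj_on (snd \<circ> g) {..<l}"
      using \<open>inj_on g {..<l}\<close> img assms(6,7) by (auto intro: comp_inj_on)
    have "(fst \<circ> g) ` {..<l} = fst ` Q" "(snd \<circ> g) ` {..<l} = snd ` Q"
      using img by (auto simp: image_comp[symmetric])
    then show "(fst \<circ> g) ` {..<l} \<inter> (snd \<circ> g) ` {..<l} = {}"
      "c \<notin> (fst \<circ> g) ` {..<l}" "c \<notin> (snd \<circ> g) ` {..<l}"
      using assms(8-10) by simp_all
  qed (use assms(1) edges in auto)
qed

lemma exists_vertex_with_many_in_neighbours:
  assumes "finite V" "E \<subseteq> V \<times> V" "\<And>v. v \<in> V \<Longrightarrow> K \<le> card (E `` {v})"
    and "S \<subset> V" "card S = card (E\<inverse> `` S) + D" "W \<subseteq> V" "card V \<le> card W + D"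
  shows "\<exists>c\<in>V. K \<le> card (W \<inter> E\<inverse> `` {c})"
proof -
  define X where "X = E\<inverse> `` S"
  have fin: "finite X" "finite W" "finite (W - X)" "finite (V - S)"
    using assms(1,2,6) unfolding X_def by (auto intro: finite_subset)
  have "S \<subseteq> V" using assms(4) by blast
  then have "card (V - S) = card V - card S"
    using assms(1) by (simp add: card_Diff_subset finite_subset)
  also have "\<dots> \<le> card W - card X"
    using assms(5,7) unfolding X_def by linarith
  also have "\<dots> \<le> card (W - X)"
    using fin(1) by (rule diff_card_le_card_Diff)
  finally have card_le: "card (V - S) \<le> card (W - X)" .
  have out_degree: "K \<le> card {c \<in> V - S. (b, c) \<in> E}" if "b \<in> W - X" for b
  proof -
    have "b \<in> V" using that assms(6) by blast
    then have "K \<le> card (E `` {b})" by (rule assms(3))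
    also have "E `` {b} = {c \<in> V - S. (b, c) \<in> E}"
      using that assms(2) unfolding X_def by auto
    finally show ?thesis .
  qed
  have "V - S \<noteq> {}" using assms(4) by blast
  then obtain c where c: "c \<in> V - S" "K \<le> card {b \<in> W - X. (b, c) \<in> E}"
    using exists_card_ge_by_double_counting[where R = "\<lambda>b c. (b, c) \<in> E",
        OF fin(3,4) _ card_le out_degree]
    by blast
  have "card {b \<in> W - X. (b, c) \<in> E} \<le> card (W \<inter> E\<inverse> `` {c})"
    using fin(2) by (intro card_mono) auto
  then show ?thesis using c le_trans by blast
qed

lemma exists_in_neighbours_with_distinct_in_neighbours:
  assumes fin: "finite V" and "V \<noteq> {}" and EV: "E \<subseteq> V \<times> V"
    and "0 < K" and "\<And>v. v \<in> V \<Longrightarrow> K \<le> card (E `` {v})"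
  shows "\<exists>c\<in>V. \<exists>W \<pi>. W \<subseteq> E\<inverse> `` {c} \<and> K \<le> card W \<and> sdr W (\<lambda>b. E\<inverse> `` {b}) \<pi>"
proof -
  have "\<exists>w. (v, w) \<in> E" if "v \<in> V" for v
  proof -
    have "0 < card (E `` {v})" using assms(4) assms(5)[OF that] by linarith
    then show ?thesis by (auto simp: card_gt_0_iff)
  qed
  then obtain S D where S: "S \<subset> V" "card S = card (E\<inverse> `` S) + D"
    and deficiency: "\<And>T. T \<subseteq> V \<Longrightarrow> card T \<le> card (E\<inverse> `` T) + D"
    using max_deficiency_set[OF fin assms(2) EV] by blast
  have "card T \<le> card (\<Union>((\<lambda>b. E\<inverse> `` {b}) ` T)) + D" if "T \<subseteq> V" for T
    using deficiency[OF that] by (simp only: Image_eq_UN[symmetric])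
  moreover have "finite (E\<inverse> `` {b})" for b
    using fin EV by (auto intro: finite_subset)
  ultimately obtain W \<pi> where W: "W \<subseteq> V" "card V \<le> card W + D"
    and \<pi>: "sdr W (\<lambda>b. E\<inverse> `` {b}) \<pi>"
    using hall_deficiency[of V "\<lambda>b. E\<inverse> `` {b}" D, OF fin] by blast
  obtain c where "c \<in> V" "K \<le> card (W \<inter> E\<inverse> `` {c})"
    using exists_vertex_with_many_in_neighbours[OF fin EV assms(5) S W] by blast
  moreover have "sdr (W \<inter> E\<inverse> `` {c}) (\<lambda>b. E\<inverse> `` {b}) \<pi>"
    using \<pi> by (rule sdr_subset) blast
  moreover have "W \<inter> E\<inverse> `` {c} \<subseteq> E\<inverse> `` {c}" by (rule Int_lower2)
  ultimately show ?thesis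
    by (intro bexI[of _ c] exI[of _ "W \<inter> E\<inverse> `` {c}"] exI[of _ \<pi>] conjI)
qed

lemma contains_S2_in_star_if_distinct_in_neighbours:
  assumes "digraph V E" "c \<in> V" "W \<subseteq> E\<inverse> `` {c}" "sdr W (\<lambda>b. E\<inverse> `` {b}) \<pi>"
    and "3 * l \<le> card W + 1"
  shows "contains_S2_in_star V E l"
proof -
  have EV: "E \<subseteq> V \<times> V" and loopfree: "\<And>v. (v, v) \<notin> E" and "finite W"
    using assms(1,3) unfolding digraph_def by (auto intro: finite_subset)
  define W' where "W' = {b \<in> W. \<pi> b \<noteq> c}"
  define P where "P = (\<lambda>b. (\<pi> b, b)) ` W'"
  have "card {b \<in> W. \<pi> b = c} \<le> 1"
    using assms(4) \<open>finite W\<close> by (auto simp: card_le_Suc0_iff_eq sdr_def inj_on_def)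
  moreover have "card W = card W' + card {b \<in> W. \<pi> b = c}"
  proof -
    have "W = W' \<union> {b \<in> W. \<pi> b = c}" unfolding W'_def by auto
    moreover have "card (W' \<union> {b \<in> W. \<pi> b = c}) = card W' + card {b \<in> W. \<pi> b = c}"
      using \<open>finite W\<close> unfolding W'_def by (intro card_Un_disjoint) auto
    ultimately show ?thesis by simp
  qed
  moreover have "card P = card W'"
    unfolding P_def by (rule card_image) (auto simp: inj_on_def)
  ultimately have "3 * l \<le> card P + 2"
    using assms(5) by linarith
  moreover have "finite P" "P \<subseteq> E" "inj_on fst P" "inj_on snd P"
    using \<open>finite W\<close> assms(4) unfolding P_def W'_def sdr_def inj_on_def by auto
  moreover have "\<forall>p\<in>P. fst p \<noteq> snd p"
    using \<open>P \<subseteq> E\<close> loopfree by auto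
  ultimately obtain Q where Q: "Q \<subseteq> P" "card Q = l" "fst ` Q \<inter> snd ` Q = {}"
    using exists_subset_with_disjoint_fst_snd[of P l] by blast
  have to_c: "(a, c) \<in> E" if "a \<in> snd ` Q" for a
    using that Q(1) assms(3) unfolding P_def W'_def by auto
  then have "c \<notin> snd ` Q" using loopfree by blast
  moreover have "c \<notin> fst ` Q" using Q(1) unfolding P_def W'_def by auto
  moreover have "finite Q" "Q \<subseteq> E" "inj_on fst Q" "inj_on snd Q"
    using Q(1) \<open>finite P\<close> \<open>P \<subseteq> E\<close> \<open>inj_on fst P\<close> \<open>inj_on snd P\<close>
    by (auto intro: finite_subset inj_on_subset)
  ultimately show ?thesis
    using contains_S2_in_starI[OF assms(2) EV _ Q(2) _ _ _ Q(3) _ _ to_c] by blast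
qed

lemma min_out_degree_le:
  assumes "finite V" "v \<in> V"
  shows "min_out_degree V E \<le> card (E `` {v})"
  using assms unfolding min_out_degree_def out_degree_def Image_singleton
  by (intro Min_le) auto

theorem theorem1p8:
  fixes V :: "'a set" and E :: "('a \<times> 'a) set" and l :: nat
  assumes "l \<ge> 1"
    and "digraph V E"
    and "V \<noteq> {}"
    and "real (min_out_degree V E) \<ge> (1 + sqrt 5) * real l"
  shows "contains_S2_in_star V E l"
proof -
  have fin: "finite V" and EV: "E \<subseteq> V \<times> V"
    using assms(2) unfolding digraph_def by auto
  have "(3::real) \<le> 1 + sqrt 5"
    using real_le_rsqrt[of 2 5] by simp
  then have "real (3 * l) \<le> real (min_out_degree V E)"
    using assms(4) mult_right_mono[of 3 "1 + sqrt 5" "real l"] by simp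
  then have "3 * l \<le> min_out_degree V E"
    by (simp only: of_nat_le_iff)
  then have "3 * l \<le> card (E `` {v})" if "v \<in> V" for v
    using min_out_degree_le[OF fin that] by (rule le_trans)
  moreover have "0 < 3 * l" using assms(1) by simp
  ultimately obtain c W \<pi> where "c \<in> V" "W \<subseteq> E\<inverse> `` {c}" "3 * l \<le> card W"
    and "sdr W (\<lambda>b. E\<inverse> `` {b}) \<pi>"
    using exists_in_neighbours_with_distinct_in_neighbours[OF fin assms(3) EV, of "3 * l"] by blast
  then show ?thesis
    by (intro contains_S2_in_star_if_distinct_in_neighbours[OF assms(2)]) auto
qed

end
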